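(* Let $\mathbf{C}$ be a category all of whose morphisms are monomorphisms, enriched over $\mathbf{Top}$ with all homsets Hausdorff. Let $\mathbf{D}$ be a full subcategory of $\mathbf{C}$ which is a skeletal category of finite objects, and let $S \in \mathrm{Ob}(\mathbf{C})$ be universal for $\mathbf{D}$ and approximable in $\mathbf{D}$ via $F : \mathrm{Ob}(\mathbf{D}) \to \mathrm{Ob}(\mathbf{D})$ and $(\Phi_A)_{A \in \mathrm{Ob}(\mathbf{D})}$. Let $\mathfrak{G} = (G_A)_{A \in \mathrm{Ob}(\mathbf{C})}$ be a family of groups with $G_A \le \mathrm{Aut}_\mathbf{C}(A)$ for all $A$. Assume $\hom_\mathbf{C}(A,S)$ is locally compact second-countable Hausdorff for every $A \in \mathrm{Ob}(\mathbf{D})$. Then for every $A \in \mathrm{Ob}(\mathbf{D})$, $|G_A|$ and $|G_{F(A)}|$ are integers and $$t^\mathfrak{G}_\mathbf{D}(A) \le \frac{|G_{F(A)}|}{|G_A|}\cdot T^\mathfrak{G}_\mathbf{C}(F(A),S).$$ In particular, if $T^\mathfrak{G}_\mathbf{C}(A,S) < \infty$ for every $A \in \mathrm{Ob}(\mathbf{D})$, then $t^\mathfrak{G}_\mathbf{D}(A) < \infty$ for every $A \in \mathrm{Ob}(\mathbf{D})$.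
   Context: A category is enriched over $\mathbf{Top}$ if each homset is a topological space and composition is continuous. Skeletal: no two distinct objects are isomorphic. A category of finite objects is a locally small directed category whose morphisms are monomorphisms, whose skeleton has at most countably many objects, and in whose skeleton each object is the codomain of only finitely many morphisms. $S$ is universal for $\mathbf{D}$ if $\hom_\mathbf{C}(D,S)\ne\varnothing$ for all $D\in\mathrm{Ob}(\mathbf{D})$. $S$ is approximable in $\mathbf{D}$ via $F$ and $(\Phi_A)$ if each $\Phi_A:\hom_\mathbf{C}(F(A),S)\to\bigcup_{C\in\mathrm{Ob}(\mathbf{D})}\hom_\mathbf{D}(A,C)$ is Borel (preimages of open subsets of each $\hom_\mathbf{D}(A,C)$ are Borel) and for all $A,B\in\mathrm{Ob}(\mathbf{D})$, $f\in\hom_\mathbf{D}(A,B)$, $u\in\hom_\mathbf{C}(F(B),S)$ there is $f'\in\hom_\mathbf{D}(F(A),F(B))$ with $\Phi_A(u\cdot f')=\Phi_B(u)\cdot f$. $\mathrm{Aut}_\mathbf{C}(A)$ is the group of invertible morphisms $A\to A$. For $f,g\in\hom(A,X)$, $f\sim_\mathfrak{G}g$ iff $f=g\cdot\alpha$ for some $\alpha\in G_A$; $\binom{X}{A}_\mathfrak{G}=\hom(A,X)/{\sim_\mathfrak{G}}$ with the quotient topology; $w\cdot\binom{X}{A}_\mathfrak{G}=\{(w\cdot f)/{\sim_\mathfrak{G}}:f\in\hom(A,X)\}$. $t^\mathfrak{G}_\mathbf{D}(A)$ is the least positive integer $n$ such that for all $k\in\mathbb{N}$ and $B\in\mathrm{Ob}(\mathbf{D})$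 there is $C\in\mathrm{Ob}(\mathbf{D})$ such that every coloring $\chi:\binom{C}{A}_\mathfrak{G}\to\{0,\dots,k-1\}$ admits $w\in\hom(B,C)$ with $|\chi(w\cdot\binom{B}{A}_\mathfrak{G})|\le n$; $\infty$ if none. $T^\mathfrak{G}_\mathbf{C}(X,S)$ is the least positive integer $n$ such that for every $k\ge 2$ and every Borel coloring $\chi:\binom{S}{X}_\mathfrak{G}\to\{0,\dots,k-1\}$ (all fibers Borel) there is $w\in\hom(S,S)$ with $|\chi(w\cdot\binom{S}{X}_\mathfrak{G})|\le n$; $\infty$ if none. Arithmetic is in $\mathbb{N}_\infty=\{1,2,\dots,\infty\}$ with $n\cdot\infty=\infty$. *)

theory Defs
  imports "HOL-Analysis.Analysis"
begin

text \<open>A category is given by a set of objects Ob, a set of morphisms Mor, domain and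
codomain maps, a (partial) composition cmp g f (meaning g after f, written g.f in the
paper) and identities.\<close>

definition hom :: "'m set \<Rightarrow> ('m \<Rightarrow> 'o) \<Rightarrow> ('m \<Rightarrow> 'o) \<Rightarrow> 'o \<Rightarrow> 'o \<Rightarrow> 'm set" where
  "hom Mor dm cd A B = {f \<in> Mor. dm f = A \<and> cd f = B}"

definition is_category ::
  "'o set \<Rightarrow> 'm set \<Rightarrow> ('m \<Rightarrow> 'o) \<Rightarrow> ('m \<Rightarrow> 'o) \<Rightarrow> ('m \<Rightarrow> 'm \<Rightarrow> 'm) \<Rightarrow> ('o \<Rightarrow> 'm) \<Rightarrow> bool" where
  "is_category Ob Mor dm cd cmp ident \<longleftrightarrow>
     (\<forall>f\<in>Mor. dm f \<in> Ob \<and> cd f \<in> Ob) \<and>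
     (\<forall>A\<in>Ob. ident A \<in> hom Mor dm cd A A) \<and>
     (\<forall>A\<in>Ob. \<forall>B\<in>Ob. \<forall>C\<in>Ob. \<forall>f\<in>hom Mor dm cd A B. \<forall>g\<in>hom Mor dm cd B C.
        cmp g f \<in> hom Mor dm cd A C) \<and>
     (\<forall>f\<in>Mor. cmp (ident (cd f)) f = f \<and> cmp f (ident (dm f)) = f) \<and>
     (\<forall>f\<in>Mor. \<forall>g\<in>Mor. \<forall>h\<in>Mor. dm g = cd f \<longrightarrow> dm h = cd g \<longrightarrow>
        cmp h (cmp g f) = cmp (cmp h g) f)"

definition all_mono :: "'m set \<Rightarrow> ('m \<Rightarrow> 'o) \<Rightarrow> ('m \<Rightarrow> 'o) \<Rightarrow> ('m \<Rightarrow> 'm \<Rightarrow> 'm) \<Rightarrow> bool" where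
  "all_mono Mor dm cd cmp \<longleftrightarrow>
     (\<forall>f\<in>Mor. \<forall>g\<in>Mor. \<forall>h\<in>Mor. dm g = dm h \<longrightarrow> cd g = dm f \<longrightarrow> cd h = dm f \<longrightarrow>
        cmp f g = cmp f h \<longrightarrow> g = h)"

definition Top_enriched ::
  "'o set \<Rightarrow> 'm set \<Rightarrow> ('m \<Rightarrow> 'o) \<Rightarrow> ('m \<Rightarrow> 'o) \<Rightarrow> ('m \<Rightarrow> 'm \<Rightarrow> 'm) \<Rightarrow> ('o \<Rightarrow> 'o \<Rightarrow> 'm topology) \<Rightarrow> bool" where
  "Top_enriched Ob Mor dm cd cmp T \<longleftrightarrow>
     (\<forall>A\<in>Ob. \<forall>B\<in>Ob. topspace (T A B) = hom Mor dm cd A B) \<and>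
     (\<forall>A\<in>Ob. \<forall>B\<in>Ob. \<forall>C\<in>Ob.
        continuous_map (prod_topology (T B C) (T A B)) (T A C) (\<lambda>(g, f). cmp g f))"

definition Aut :: "'m set \<Rightarrow> ('m \<Rightarrow> 'o) \<Rightarrow> ('m \<Rightarrow> 'o) \<Rightarrow> ('m \<Rightarrow> 'm \<Rightarrow> 'm) \<Rightarrow> ('o \<Rightarrow> 'm) \<Rightarrow> 'o \<Rightarrow> 'm set" where
  "Aut Mor dm cd cmp ident A =
     {f \<in> hom Mor dm cd A A. \<exists>g\<in>hom Mor dm cd A A. cmp g f = ident A \<and> cmp f g = ident A}"

definition subgroup_Aut :: "'m set \<Rightarrow> ('m \<Rightarrow> 'o) \<Rightarrow> ('m \<Rightarrow> 'o) \<Rightarrow> ('m \<Rightarrow> 'm \<Rightarrow> 'm) \<Rightarrow> ('o \<Rightarrow> 'm) \<Rightarrow> 'o \<Rightarrow> 'm set \<Rightarrow> bool" where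
  "subgroup_Aut Mor dm cd cmp ident A H \<longleftrightarrow>
     H \<subseteq> Aut Mor dm cd cmp ident A \<and> ident A \<in> H \<and>
     (\<forall>f\<in>H. \<forall>g\<in>H. cmp g f \<in> H) \<and>
     (\<forall>f\<in>H. \<exists>g\<in>H. cmp g f = ident A \<and> cmp f g = ident A)"

definition isomorphic :: "'m set \<Rightarrow> ('m \<Rightarrow> 'o) \<Rightarrow> ('m \<Rightarrow> 'o) \<Rightarrow> ('m \<Rightarrow> 'm \<Rightarrow> 'm) \<Rightarrow> ('o \<Rightarrow> 'm) \<Rightarrow> 'o \<Rightarrow> 'o \<Rightarrow> bool" where
  "isomorphic Mor dm cd cmp ident A B \<longleftrightarrow>
     (\<exists>f\<in>hom Mor dm cd A B. \<exists>g\<in>hom Mor dm cd B A. cmp g f = ident A \<and> cmp f g = ident B)"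

text \<open>The full subcategory of C on the object set DOb is a skeletal category of finite
objects: directed, all morphisms mono (automatic here), skeletal (so it is its own
skeleton), countably many objects, each object the codomain of finitely many morphisms.\<close>
definition skeletal_cat_finite_objects ::
  "'m set \<Rightarrow> ('m \<Rightarrow> 'o) \<Rightarrow> ('m \<Rightarrow> 'o) \<Rightarrow> ('m \<Rightarrow> 'm \<Rightarrow> 'm) \<Rightarrow> ('o \<Rightarrow> 'm) \<Rightarrow> 'o set \<Rightarrow> bool" where
  "skeletal_cat_finite_objects Mor dm cd cmp ident DOb \<longleftrightarrow>
     (\<forall>A\<in>DOb. \<forall>B\<in>DOb. \<exists>C\<in>DOb. hom Mor dm cd A C \<noteq> {} \<and> hom Mor dm cd B C \<noteq> {}) \<and>
     all_mono {f \<in> Mor. dm f \<in> DOb \<and> cd f \<in> DOb} dm cd cmp \<and>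
     (\<forall>A\<in>DOb. \<forall>B\<in>DOb. isomorphic Mor dm cd cmp ident A B \<longrightarrow> A = B) \<and>
     countable DOb \<and>
     (\<forall>B\<in>DOb. finite {f \<in> Mor. dm f \<in> DOb \<and> cd f = B})"

definition borel_sets :: "'a topology \<Rightarrow> 'a set set" where
  "borel_sets X = sigma_sets (topspace X) {U. openin X U}"

definition gclass :: "('m \<Rightarrow> 'm \<Rightarrow> 'm) \<Rightarrow> 'm set \<Rightarrow> 'm \<Rightarrow> 'm set" where
  "gclass cmp GA f = (\<lambda>\<alpha>. cmp f \<alpha>) ` GA"

definition binom :: "'m set \<Rightarrow> ('m \<Rightarrow> 'o) \<Rightarrow> ('m \<Rightarrow> 'o) \<Rightarrow> ('m \<Rightarrow> 'm \<Rightarrow> 'm) \<Rightarrow> ('o \<Rightarrow> 'm set) \<Rightarrow> 'o \<Rightarrow> 'o \<Rightarrow> 'm set set" where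
  "binom Mor dm cd cmp G X A = gclass cmp (G A) ` hom Mor dm cd A X"

definition wbinom :: "'m set \<Rightarrow> ('m \<Rightarrow> 'o) \<Rightarrow> ('m \<Rightarrow> 'o) \<Rightarrow> ('m \<Rightarrow> 'm \<Rightarrow> 'm) \<Rightarrow> ('o \<Rightarrow> 'm set) \<Rightarrow> 'm \<Rightarrow> 'o \<Rightarrow> 'o \<Rightarrow> 'm set set" where
  "wbinom Mor dm cd cmp G w X A = (\<lambda>f. gclass cmp (G A) (cmp w f)) ` hom Mor dm cd A X"

definition binom_borel :: "'m set \<Rightarrow> ('m \<Rightarrow> 'o) \<Rightarrow> ('m \<Rightarrow> 'o) \<Rightarrow> ('m \<Rightarrow> 'm \<Rightarrow> 'm) \<Rightarrow> ('o \<Rightarrow> 'o \<Rightarrow> 'm topology) \<Rightarrow> ('o \<Rightarrow> 'm set) \<Rightarrow> 'o \<Rightarrow> 'o \<Rightarrow> 'm set set set" where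
  "binom_borel Mor dm cd cmp T G X A =
     (let Q = binom Mor dm cd cmp G X A in
      sigma_sets Q {U. U \<subseteq> Q \<and>
        openin (T A X) {f \<in> hom Mor dm cd A X. gclass cmp (G A) f \<in> U}})"

definition least_pos_or_inf :: "(nat \<Rightarrow> bool) \<Rightarrow> ereal" where
  "least_pos_or_inf P = (if \<exists>n. n \<ge> 1 \<and> P n then ereal (real (LEAST n. n \<ge> 1 \<and> P n)) else \<infinity>)"

definition small_ramsey_degree :: "'m set \<Rightarrow> ('m \<Rightarrow> 'o) \<Rightarrow> ('m \<Rightarrow> 'o) \<Rightarrow> ('m \<Rightarrow> 'm \<Rightarrow> 'm) \<Rightarrow> ('o \<Rightarrow> 'm set) \<Rightarrow> 'o set \<Rightarrow> 'o \<Rightarrow> ereal" where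
  "small_ramsey_degree Mor dm cd cmp G DOb A = least_pos_or_inf (\<lambda>n.
     \<forall>k::nat. \<forall>B\<in>DOb. \<exists>C\<in>DOb. \<forall>(col :: 'm set \<Rightarrow> nat).
       (\<forall>c\<in>binom Mor dm cd cmp G C A. col c < k) \<longrightarrow>
       (\<exists>w\<in>hom Mor dm cd B C. card (col ` wbinom Mor dm cd cmp G w B A) \<le> n))"

definition big_ramsey_degree :: "'m set \<Rightarrow> ('m \<Rightarrow> 'o) \<Rightarrow> ('m \<Rightarrow> 'o) \<Rightarrow> ('m \<Rightarrow> 'm \<Rightarrow> 'm) \<Rightarrow> ('o \<Rightarrow> 'o \<Rightarrow> 'm topology) \<Rightarrow> ('o \<Rightarrow> 'm set) \<Rightarrow> 'o \<Rightarrow> 'o \<Rightarrow> ereal" where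
  "big_ramsey_degree Mor dm cd cmp T G X S = least_pos_or_inf (\<lambda>n.
     \<forall>k::nat. k \<ge> 2 \<longrightarrow> (\<forall>(col :: 'm set \<Rightarrow> nat).
       (\<forall>c\<in>binom Mor dm cd cmp G S X. col c < k) \<longrightarrow>
       (\<forall>i<k. {c \<in> binom Mor dm cd cmp G S X. col c = i} \<in> binom_borel Mor dm cd cmp T G S X) \<longrightarrow>
       (\<exists>w\<in>hom Mor dm cd S S. card (col ` wbinom Mor dm cd cmp G w S X) \<le> n)))"

definition approximable :: "'m set \<Rightarrow> ('m \<Rightarrow> 'o) \<Rightarrow> ('m \<Rightarrow> 'o) \<Rightarrow> ('m \<Rightarrow> 'm \<Rightarrow> 'm) \<Rightarrow> ('o \<Rightarrow> 'o \<Rightarrow> 'm topology) \<Rightarrow> 'o set \<Rightarrow> 'o \<Rightarrow> ('o \<Rightarrow> 'o) \<Rightarrow> ('o \<Rightarrow> 'm \<Rightarrow> 'm) \<Rightarrow> bool" where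
  "approximable Mor dm cd cmp T DOb S F \<Phi> \<longleftrightarrow>
     (\<forall>A\<in>DOb. F A \<in> DOb) \<and>
     (\<forall>A\<in>DOb. \<forall>u\<in>hom Mor dm cd (F A) S. \<Phi> A u \<in> (\<Union>C\<in>DOb. hom Mor dm cd A C)) \<and>
     (\<forall>A\<in>DOb. \<forall>C\<in>DOb. \<forall>U. openin (T A C) U \<longrightarrow>
        {u \<in> hom Mor dm cd (F A) S. \<Phi> A u \<in> U} \<in> borel_sets (T (F A) S)) \<and>
     (\<forall>A\<in>DOb. \<forall>B\<in>DOb. \<forall>f\<in>hom Mor dm cd A B. \<forall>u\<in>hom Mor dm cd (F B) S.
        \<exists>f'\<in>hom Mor dm cd (F A) (F B). \<Phi> A (cmp u f') = cmp (\<Phi> B u) f)"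

end

theory Submission
  imports Defs
begin

(*
  Colour an embedding h of A into an object C of D by the colour of its G_A-class together with
  its offset inside that class, measured from a fixed representative; a copy of B then carries
  exactly |G_A| times as many colours as its classes do. Pulled back along Phi_A, this becomes a
  colouring of the embeddings F A -> S with finitely many colours and Borel fibres, because the
  homsets of D are finite and discrete, D is countable and Phi_A is Borel. Colouring each
  G_(F A)-class by the set of colours it contains is then Borel on the quotient: the quotient map
  of a free action of a finite group by homeomorphisms of a second countable Hausdorff space is
  locally injective, so images of saturated Borel sets are Borel. The big Ramsey degree yields
  w : S -> S on whose classes at most T(F A, S) colour sets occur, hence at most
  |G_(F A)| T(F A, S) colours, and approximability transports these colours onto a copy of B.
*)

lemma sigma_algebra_borel_sets: "sigma_algebra (topspace X) (borel_sets X)"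
  unfolding borel_sets_def by (rule sigma_algebra_sigma_sets) (auto dest: openin_subset)

lemma borel_sets_continuous_map_preimage:
  assumes f: "continuous_map X Y f" and E: "E \<in> borel_sets Y"
  shows "{x \<in> topspace X. f x \<in> E} \<in> borel_sets X"
  using E unfolding borel_sets_def
proof (induction rule: sigma_sets.induct)
  case (Basic U)
  then show ?case
    using openin_continuous_map_preimage[OF f] by auto
next
  case Empty
  then show ?case by (simp add: sigma_sets.Empty)
next
  case (Compl E)
  have "{x \<in> topspace X. f x \<in> topspace Y - E} = topspace X - {x \<in> topspace X. f x \<in> E}"
    using f by (auto simp: continuous_map_def)
  then show ?case using sigma_sets.Compl[OF Compl.IH] by simp
next
  case (Union E)
  have "{x \<in> topspace X. f x \<in> (\<Union>i. E i)} = (\<Union>i. {x \<in> topspace X. f x \<in> E i})" by blast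
  then show ?case using sigma_sets.Union[OF Union.IH] by simp
qed

lemma borel_sets_image_of_fibers:
  assumes "finite \<Sigma>" "countable R"
    and range: "\<And>\<sigma> u. \<sigma> \<in> \<Sigma> \<Longrightarrow> u \<in> topspace X \<Longrightarrow> g \<sigma> u \<in> R"
    and fibers: "\<And>\<sigma> j. \<sigma> \<in> \<Sigma> \<Longrightarrow> {u \<in> topspace X. g \<sigma> u = j} \<in> borel_sets X"
  shows "{u \<in> topspace X. P ((\<lambda>\<sigma>. g \<sigma> u) ` \<Sigma>)} \<in> borel_sets X"
proof -
  interpret sigma_algebra "topspace X" "borel_sets X" by (rule sigma_algebra_borel_sets)
  let ?I = "{t \<in> \<Sigma> \<rightarrow>\<^sub>E R. P (t ` \<Sigma>)}"
  have "{u \<in> topspace X. P ((\<lambda>\<sigma>. g \<sigma> u) ` \<Sigma>)}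
      = {u \<in> topspace X. \<exists>t\<in>?I. \<forall>\<sigma>\<in>\<Sigma>. g \<sigma> u = t \<sigma>}"
  proof (intro Collect_cong conj_cong refl iffI)
    fix u assume "u \<in> topspace X" "P ((\<lambda>\<sigma>. g \<sigma> u) ` \<Sigma>)"
    then show "\<exists>t\<in>?I. \<forall>\<sigma>\<in>\<Sigma>. g \<sigma> u = t \<sigma>"
      using range by (intro bexI[of _ "restrict (\<lambda>\<sigma>. g \<sigma> u) \<Sigma>"]) auto
  next
    fix u assume "\<exists>t\<in>?I. \<forall>\<sigma>\<in>\<Sigma>. g \<sigma> u = t \<sigma>"
    then obtain t where "t \<in> ?I" "\<forall>\<sigma>\<in>\<Sigma>. g \<sigma> u = t \<sigma>" by blast
    then show "P ((\<lambda>\<sigma>. g \<sigma> u) ` \<Sigma>)" by (metis (mono_tags, lifting) image_cong mem_Collect_eq)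
  qed
  also have "\<dots> \<in> borel_sets X"
    using assms countable_PiE[of \<Sigma> "\<lambda>_. R"]
    by (intro sets_Collect_countable_Ex' sets_Collect_countable_All')
       (auto intro: countable_subset[of ?I] countable_finite)
  finally show ?thesis .
qed

lemma displacing_neighbourhood:
  assumes "Hausdorff_space X" "continuous_map X X \<sigma>" "u \<in> topspace X" "\<sigma> u \<noteq> u"
  shows "\<exists>N. openin X N \<and> u \<in> N \<and> (\<forall>v\<in>N. \<sigma> v \<notin> N)"
proof -
  have "\<sigma> u \<in> topspace X"
    using continuous_map_image_subset_topspace[OF assms(2)] assms(3) by blast
  then obtain P R where PR: "openin X P" "openin X R" "u \<in> P" "\<sigma> u \<in> R" "disjnt P R"
    using assms unfolding Hausdorff_space_def by metis
  let ?N = "P \<inter> {v \<in> topspace X. \<sigma> v \<in> R}"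
  have "openin X ?N"
    using PR openin_continuous_map_preimage[OF assms(2)] by blast
  moreover have "\<forall>v\<in>?N. \<sigma> v \<notin> ?N" using PR(5) by (auto simp: disjnt_iff)
  ultimately show ?thesis using PR assms(3) by blast
qed

locale finite_free_action =
  fixes X :: "'a topology" and \<Sigma> :: "('a \<Rightarrow> 'a) set" and q :: "'a \<Rightarrow> 'b"
  assumes finite_actions: "finite \<Sigma>"
    and continuous_actions: "\<sigma> \<in> \<Sigma> \<Longrightarrow> continuous_map X X \<sigma>"
    and orbits: "u \<in> topspace X \<Longrightarrow> v \<in> topspace X \<Longrightarrow> q v = q u \<longleftrightarrow> (\<exists>\<sigma>\<in>\<Sigma>. v = \<sigma> u)"
    and free: "\<sigma> \<in> \<Sigma> \<Longrightarrow> u \<in> topspace X \<Longrightarrow> \<sigma> u = u \<Longrightarrow> v \<in> topspace X \<Longrightarrow> \<sigma> v = v"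
begin

definition quotient_sets :: "'b set set" where
  "quotient_sets = sigma_sets (q ` topspace X)
     {U. U \<subseteq> q ` topspace X \<and> openin X {u \<in> topspace X. q u \<in> U}}"

sublocale quotient: sigma_algebra "q ` topspace X" quotient_sets
  unfolding quotient_sets_def by (rule sigma_algebra_sigma_sets) auto

lemma action_topspace: "\<sigma> \<in> \<Sigma> \<Longrightarrow> u \<in> topspace X \<Longrightarrow> \<sigma> u \<in> topspace X"
  using continuous_map_image_subset_topspace[OF continuous_actions] by blast

lemma image_openin_quotient_sets:
  assumes U: "openin X U"
  shows "q ` U \<in> quotient_sets"
proof -
  have U_sub: "U \<subseteq> topspace X" using openin_subset[OF U] .
  have "{u \<in> topspace X. q u \<in> q ` U} = (\<Union>\<sigma>\<in>\<Sigma>. {u \<in> topspace X. \<sigma> u \<in> U})"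
  proof (intro equalityI subsetI)
    fix u assume "u \<in> {u \<in> topspace X. q u \<in> q ` U}"
    then obtain v where v: "u \<in> topspace X" "v \<in> U" "q v = q u" by auto
    then obtain \<sigma> where "\<sigma> \<in> \<Sigma>" "v = \<sigma> u" using orbits[of u v] U_sub by auto
    then show "u \<in> (\<Union>\<sigma>\<in>\<Sigma>. {u \<in> topspace X. \<sigma> u \<in> U})" using v by blast
  next
    fix u assume "u \<in> (\<Union>\<sigma>\<in>\<Sigma>. {u \<in> topspace X. \<sigma> u \<in> U})"
    then obtain \<sigma> where \<sigma>: "\<sigma> \<in> \<Sigma>" "u \<in> topspace X" "\<sigma> u \<in> U" by blast
    then have "q (\<sigma> u) = q u" using orbits[of u "\<sigma> u"] action_topspace by auto
    then show "u \<in> {u \<in> topspace X. q u \<in> q ` U}" using \<sigma> by (metis (mono_tags) image_eqI mem_Collect_eq)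
  qed
  moreover have "openin X (\<Union>\<sigma>\<in>\<Sigma>. {u \<in> topspace X. \<sigma> u \<in> U})"
    using openin_continuous_map_preimage[OF continuous_actions U] by blast
  ultimately show ?thesis
    unfolding quotient_sets_def using U_sub by (intro sigma_sets.Basic) auto
qed

lemma locally_injective:
  assumes "Hausdorff_space X" "u \<in> topspace X"
  shows "\<exists>V. openin X V \<and> u \<in> V \<and> inj_on q V"
proof -
  let ?\<Sigma>' = "{\<sigma> \<in> \<Sigma>. \<sigma> u \<noteq> u}"
  have "\<forall>\<sigma>\<in>?\<Sigma>'. \<exists>N. openin X N \<and> u \<in> N \<and> (\<forall>v\<in>N. \<sigma> v \<notin> N)"
    using displacing_neighbourhood[OF assms(1) _ assms(2)] continuous_actions by blast
  then obtain N where N: "\<And>\<sigma>. \<sigma> \<in> ?\<Sigma>' \<Longrightarrow> openin X (N \<sigma>) \<and> u \<in> N \<sigma> \<and> (\<forall>v\<in>N \<sigma>. \<sigma> v \<notin> N \<sigma>)"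
    by (rule bchoice[elim_format]) blast
  define V where "V = topspace X \<inter> \<Inter> (N ` ?\<Sigma>')"
  have "openin X V"
    unfolding V_def using N finite_actions by (intro openin_Int_Inter) auto
  moreover have "u \<in> V" unfolding V_def using N assms(2) by blast
  moreover have "inj_on q V"
  proof (rule inj_onI)
    fix v w assume v: "v \<in> V" and w: "w \<in> V" and "q v = q w"
    then obtain \<sigma> where \<sigma>: "\<sigma> \<in> \<Sigma>" "w = \<sigma> v"
      using orbits[of v w] unfolding V_def by auto
    show "v = w"
    proof (cases "\<sigma> u = u")
      case True
      then show ?thesis using free[OF \<sigma>(1) assms(2)] v \<sigma>(2) unfolding V_def by auto
    next
      case False
      then show ?thesis using N[of \<sigma>] v w \<sigma> unfolding V_def by auto
    qed
  qed
  ultimately show ?thesis by blast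
qed

lemma image_borel_Int_injective:
  assumes V: "openin X V" "inj_on q V" and E: "E \<in> borel_sets X"
  shows "q ` (E \<inter> V) \<in> quotient_sets"
  using E unfolding borel_sets_def
proof (induction rule: sigma_sets.induct)
  case (Basic U')
  then show ?case using image_openin_quotient_sets V(1) by blast
next
  case Empty
  then show ?case by (simp add: quotient_sets_def sigma_sets.Empty)
next
  case (Compl E)
  have "(topspace X - E) \<inter> V = V - E \<inter> V" using openin_subset[OF V(1)] by blast
  then have "q ` ((topspace X - E) \<inter> V) = q ` V - q ` (E \<inter> V)"
    using inj_on_image_set_diff[OF V(2)] by auto
  then show ?case
    using quotient.Diff Compl.IH image_openin_quotient_sets[OF V(1)]
    by metis
next
  case (Union E)
  have "q ` ((\<Union>i. E i) \<inter> V) = (\<Union>i. q ` (E i \<inter> V))" by auto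
  moreover have "(\<Union>i. q ` (E i \<inter> V)) \<in> quotient_sets"
    using Union.IH by (intro quotient.countable_UN) blast
  ultimately show ?case by simp
qed

theorem saturated_borel_quotient_sets:
  assumes "Hausdorff_space X" "second_countable X"
    and W: "W \<subseteq> q ` topspace X" "{u \<in> topspace X. q u \<in> W} \<in> borel_sets X"
  shows "W \<in> quotient_sets"
proof -
  obtain \<B> where \<B>: "countable \<B>" "\<And>V. V \<in> \<B> \<Longrightarrow> openin X V"
    "\<And>U u. openin X U \<Longrightarrow> u \<in> U \<Longrightarrow> \<exists>V\<in>\<B>. u \<in> V \<and> V \<subseteq> U"
    using assms(2) unfolding second_countable_def by metis
  let ?E = "{u \<in> topspace X. q u \<in> W}"
  have "W = (\<Union>V\<in>{V \<in> \<B>. inj_on q V}. q ` (?E \<inter> V))"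
  proof (intro equalityI subsetI)
    fix c assume "c \<in> W"
    then obtain u where u: "u \<in> topspace X" "c = q u" using W(1) by blast
    obtain V where "openin X V" "u \<in> V" "inj_on q V"
      using locally_injective[OF assms(1) u(1)] by blast
    moreover obtain V' where "V' \<in> \<B>" "u \<in> V'" "V' \<subseteq> V"
      using \<B>(3) \<open>openin X V\<close> \<open>u \<in> V\<close> by blast
    ultimately have "V' \<in> \<B>" "u \<in> V'" "inj_on q V'"
      using inj_on_subset by blast+
    then show "c \<in> (\<Union>V\<in>{V \<in> \<B>. inj_on q V}. q ` (?E \<inter> V))"
      using u \<open>c \<in> W\<close> by blast
  qed auto
  also have "\<dots> \<in> quotient_sets"
    using \<B>(1,2) image_borel_Int_injective W(2)
    by (intro quotient.countable_UN') auto
  finally show ?thesis .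
qed

end

lemma card_image_Union_le:
  assumes "finite ((\<lambda>c. \<gamma> ` c) ` \<W>)" and "\<And>c. c \<in> \<W> \<Longrightarrow> finite c \<and> card c \<le> b"
  shows "card (\<gamma> ` \<Union>\<W>) \<le> card ((\<lambda>c. \<gamma> ` c) ` \<W>) * b"
proof -
  have "card (\<gamma> ` \<Union>\<W>) = card (\<Union>((\<lambda>c. \<gamma> ` c) ` \<W>))" by (simp add: image_Union)
  also have "\<dots> \<le> (\<Sum>Z\<in>(\<lambda>c. \<gamma> ` c) ` \<W>. card Z)" by (rule card_Union_le_sum_card)
  also have "\<dots> \<le> card ((\<lambda>c. \<gamma> ` c) ` \<W>) * b"
  proof -
    have "card Z \<le> b" if "Z \<in> (\<lambda>c. \<gamma> ` c) ` \<W>" for Z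
      using that assms(2) card_image_le le_trans by blast
    then show ?thesis using sum_bounded_above by (metis of_nat_id)
  qed
  finally show ?thesis .
qed

locale mono_category_with_groups =
  fixes Ob :: "'o set" and Mor :: "'m set" and dm cd :: "'m \<Rightarrow> 'o"
    and cmp :: "'m \<Rightarrow> 'm \<Rightarrow> 'm" and ident :: "'o \<Rightarrow> 'm" and G :: "'o \<Rightarrow> 'm set"
  assumes category: "is_category Ob Mor dm cd cmp ident"
    and mono: "all_mono Mor dm cd cmp"
    and groups: "\<forall>A\<in>Ob. subgroup_Aut Mor dm cd cmp ident A (G A)"
begin

abbreviation "Hom \<equiv> hom Mor dm cd"
abbreviation "cls A \<equiv> gclass cmp (G A)"
abbreviation "Binom \<equiv> binom Mor dm cd cmp G"
abbreviation "WBinom \<equiv> wbinom Mor dm cd cmp G"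

lemma hom_Ob: "f \<in> Hom A B \<Longrightarrow> A \<in> Ob \<and> B \<in> Ob"
  using category unfolding is_category_def hom_def by blast

lemma comp_hom: "f \<in> Hom A B \<Longrightarrow> g \<in> Hom B C \<Longrightarrow> cmp g f \<in> Hom A C"
  using category hom_Ob unfolding is_category_def by metis

lemma comp_assoc:
  "f \<in> Hom A B \<Longrightarrow> g \<in> Hom B C \<Longrightarrow> h \<in> Hom C D \<Longrightarrow> cmp h (cmp g f) = cmp (cmp h g) f"
  using category unfolding is_category_def hom_def by simp

lemma ident_hom: "A \<in> Ob \<Longrightarrow> ident A \<in> Hom A A"
  using category unfolding is_category_def by blast

lemma comp_ident_right: "f \<in> Hom A B \<Longrightarrow> cmp f (ident A) = f"
  using category unfolding is_category_def hom_def by auto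

lemma comp_ident_left: "f \<in> Hom A B \<Longrightarrow> cmp (ident B) f = f"
  using category unfolding is_category_def hom_def by auto

lemma mono_cancel:
  "f \<in> Hom B C \<Longrightarrow> g \<in> Hom A B \<Longrightarrow> h \<in> Hom A B \<Longrightarrow> cmp f g = cmp f h \<Longrightarrow> g = h"
  using mono unfolding all_mono_def hom_def by auto

lemma G_hom: "A \<in> Ob \<Longrightarrow> \<alpha> \<in> G A \<Longrightarrow> \<alpha> \<in> Hom A A"
  using groups unfolding subgroup_Aut_def Aut_def by blast

lemma G_ident: "A \<in> Ob \<Longrightarrow> ident A \<in> G A"
  using groups unfolding subgroup_Aut_def by blast

lemma G_comp: "A \<in> Ob \<Longrightarrow> \<alpha> \<in> G A \<Longrightarrow> \<beta> \<in> G A \<Longrightarrow> cmp \<alpha> \<beta> \<in> G A"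
  using groups unfolding subgroup_Aut_def by blast

lemma G_inverse: "A \<in> Ob \<Longrightarrow> \<alpha> \<in> G A \<Longrightarrow> \<exists>\<beta>\<in>G A. cmp \<beta> \<alpha> = ident A \<and> cmp \<alpha> \<beta> = ident A"
  using groups unfolding subgroup_Aut_def by blast

lemma cls_comp:
  assumes x: "x \<in> Hom A X" and \<alpha>: "\<alpha> \<in> G A"
  shows "cls A (cmp x \<alpha>) = cls A x"
proof -
  have A: "A \<in> Ob" using hom_Ob[OF x] by blast
  obtain \<alpha>' where \<alpha>': "\<alpha>' \<in> G A" "cmp \<alpha> \<alpha>' = ident A" using G_inverse[OF A \<alpha>] by blast
  have shift: "cmp (cmp x \<alpha>) \<beta> = cmp x (cmp \<alpha> \<beta>)" if "\<beta> \<in> G A" for \<beta>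
    using comp_assoc[OF G_hom[OF A that] G_hom[OF A \<alpha>] x] by simp
  have cancel: "cmp \<alpha> (cmp \<alpha>' \<beta>) = \<beta>" if "\<beta> \<in> G A" for \<beta>
    using comp_assoc[OF G_hom[OF A that] G_hom[OF A \<alpha>'(1)] G_hom[OF A \<alpha>]] \<alpha>'(2)
      comp_ident_left[OF G_hom[OF A that]] by simp
  show ?thesis
    unfolding gclass_def
  proof (intro equalityI image_subsetI)
    fix \<beta> assume "\<beta> \<in> G A"
    then show "cmp (cmp x \<alpha>) \<beta> \<in> cmp x ` G A"
      using shift G_comp[OF A \<alpha>] by blast
  next
    fix \<beta> assume \<beta>: "\<beta> \<in> G A"
    then have "cmp x \<beta> = cmp (cmp x \<alpha>) (cmp \<alpha>' \<beta>)"
      using shift[OF G_comp[OF A \<alpha>'(1) \<beta>]] cancel by simp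
    then show "cmp x \<beta> \<in> (\<lambda>\<beta>. cmp (cmp x \<alpha>) \<beta>) ` G A"
      using G_comp[OF A \<alpha>'(1) \<beta>] by blast
  qed
qed

lemma cls_self: "x \<in> Hom A X \<Longrightarrow> x \<in> cls A x"
  unfolding gclass_def using G_ident hom_Ob comp_ident_right by (metis image_eqI)

lemma cls_hom: "x \<in> Hom A X \<Longrightarrow> cls A x \<subseteq> Hom A X"
  unfolding gclass_def using comp_hom G_hom hom_Ob by blast

lemma cls_eq_iff:
  assumes "x \<in> Hom A X" "y \<in> Hom A X"
  shows "cls A y = cls A x \<longleftrightarrow> (\<exists>\<beta>\<in>G A. y = cmp x \<beta>)"
proof
  assume "cls A y = cls A x"
  then show "\<exists>\<beta>\<in>G A. y = cmp x \<beta>" using cls_self[OF assms(2)] unfolding gclass_def by blast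
qed (use cls_comp[OF assms(1)] in blast)

lemma finite_cls: "finite (G A) \<Longrightarrow> finite (cls A x) \<and> card (cls A x) \<le> card (G A)"
  unfolding gclass_def by (simp add: card_image_le)

lemma Union_wbinom:
  assumes w: "w \<in> Hom Y Z"
  shows "\<Union> (WBinom w Y X) = cmp w ` Hom X Y"
proof (intro equalityI subsetI)
  fix g assume "g \<in> \<Union> (WBinom w Y X)"
  then obtain f \<beta> where f: "f \<in> Hom X Y" and \<beta>: "\<beta> \<in> G X" and g: "g = cmp (cmp w f) \<beta>"
    unfolding wbinom_def gclass_def by blast
  have X: "X \<in> Ob" using hom_Ob[OF f] by blast
  have "g = cmp w (cmp f \<beta>)" using comp_assoc[OF G_hom[OF X \<beta>] f w] g by simp
  then show "g \<in> cmp w ` Hom X Y" using comp_hom[OF G_hom[OF X \<beta>] f] by blast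
next
  fix g assume "g \<in> cmp w ` Hom X Y"
  then obtain f where f: "f \<in> Hom X Y" and g: "g = cmp w f" by blast
  have "g \<in> cls X (cmp w f)" using cls_self[OF comp_hom[OF f w]] g by simp
  then show "g \<in> \<Union> (WBinom w Y X)"
    unfolding wbinom_def using f by blast
qed

definition rep :: "'o \<Rightarrow> 'm \<Rightarrow> 'm" where
  "rep A h = (SOME f. f \<in> cls A h)"

definition offset :: "'o \<Rightarrow> 'm \<Rightarrow> 'm" where
  "offset A h = (SOME \<alpha>. \<alpha> \<in> G A \<and> cmp (rep A h) \<alpha> = h)"

lemma rep_in_cls:
  assumes "h \<in> Hom A C"
  shows "rep A h \<in> cls A h"
  unfolding rep_def using cls_self[OF assms] by (rule someI)

lemma rep_offset:
  assumes h: "h \<in> Hom A C"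
  shows "offset A h \<in> G A \<and> cmp (rep A h) (offset A h) = h"
proof -
  have r: "rep A h \<in> Hom A C" using rep_in_cls[OF h] cls_hom[OF h] by blast
  obtain \<beta> where "\<beta> \<in> G A" "rep A h = cmp h \<beta>"
    using rep_in_cls[OF h] unfolding gclass_def by blast
  then have "cls A h = cls A (rep A h)" using cls_comp[OF h] by simp
  then have "\<exists>\<alpha>. \<alpha> \<in> G A \<and> cmp (rep A h) \<alpha> = h" using cls_eq_iff[OF r h] by auto
  then show ?thesis unfolding offset_def by (rule someI_ex)
qed

lemma offset_unique:
  assumes h: "h \<in> Hom A C" and \<alpha>: "\<alpha> \<in> G A" "cmp (rep A h) \<alpha> = h"
  shows "offset A h = \<alpha>"
proof -
  have A: "A \<in> Ob" using hom_Ob[OF h] by blast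
  have r: "rep A h \<in> Hom A C" using rep_in_cls[OF h] cls_hom[OF h] by blast
  show ?thesis
    using mono_cancel[OF r G_hom[OF A] G_hom[OF A \<alpha>(1)]] rep_offset[OF h] \<alpha>(2) by simp
qed

lemma offset_coloring_image:
  assumes w: "w \<in> Hom B C"
  shows "(\<lambda>h. (col (cls A h), offset A h)) ` cmp w ` Hom A B
       = (col ` WBinom w B A) \<times> G A"
proof (intro equalityI subsetI)
  fix x assume "x \<in> (\<lambda>h. (col (cls A h), offset A h)) ` cmp w ` Hom A B"
  then obtain f where "f \<in> Hom A B" "x = (col (cls A (cmp w f)), offset A (cmp w f))" by blast
  then show "x \<in> (col ` WBinom w B A) \<times> G A"
    unfolding wbinom_def using rep_offset comp_hom w by blast
next
  fix x assume "x \<in> (col ` WBinom w B A) \<times> G A"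
  then obtain f \<alpha> where f: "f \<in> Hom A B" and \<alpha>: "\<alpha> \<in> G A"
    and x: "x = (col (cls A (cmp w f)), \<alpha>)"
    unfolding wbinom_def by blast
  have A: "A \<in> Ob" using hom_Ob[OF f] by blast
  define h0 where "h0 = cmp w f"
  have h0: "h0 \<in> Hom A C" unfolding h0_def using comp_hom[OF f w] .
  obtain \<beta> where \<beta>: "\<beta> \<in> G A" "rep A h0 = cmp h0 \<beta>"
    using rep_in_cls[OF h0] unfolding gclass_def by blast
  \<comment> \<open>shift f so that \<open>cmp w f'\<close> sits at offset \<open>\<alpha>\<close> in the class of \<open>cmp w f\<close>\<close>
  define f' where "f' = cmp (cmp f \<beta>) \<alpha>"
  have f': "f' \<in> Hom A B" unfolding f'_def using comp_hom G_hom[OF A] f \<alpha> \<beta> by blast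
  have "cmp w f' = cmp (cmp h0 \<beta>) \<alpha>"
    unfolding f'_def h0_def
    using comp_assoc[OF G_hom[OF A \<alpha>] comp_hom[OF G_hom[OF A \<beta>(1)] f] w]
      comp_assoc[OF G_hom[OF A \<beta>(1)] f w] by simp
  then have h0_f': "cmp w f' = cmp (rep A h0) \<alpha>" using \<beta>(2) by simp
  have rep_h0: "rep A h0 \<in> Hom A C" using rep_in_cls[OF h0] cls_hom[OF h0] by blast
  have same_cls: "cls A (cmp w f') = cls A h0"
    using h0_f' cls_comp[OF rep_h0 \<alpha>] cls_comp[OF h0 \<beta>(1)] \<beta>(2) by simp
  then have "rep A (cmp w f') = rep A h0" unfolding rep_def by simp
  then have "offset A (cmp w f') = \<alpha>"
    using offset_unique[OF comp_hom[OF f' w] \<alpha>] h0_f' by simp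
  then have "x = (\<lambda>h. (col (cls A h), offset A h)) (cmp w f')"
    using same_cls x unfolding h0_def by simp
  then show "x \<in> (\<lambda>h. (col (cls A h), offset A h)) ` cmp w ` Hom A B" using f' by blast
qed

lemma card_offset_coloring_image:
  assumes w: "w \<in> Hom B C" and "finite (G A)"
  shows "card ((\<lambda>h. (col (cd h) (cls A h), offset A h)) ` cmp w ` Hom A B)
       = card (col C ` WBinom w B A) * card (G A)"
proof -
  have "cd h = C" if "h \<in> cmp w ` Hom A B" for h
    using that comp_hom[OF _ w] unfolding hom_def by blast
  then have "(\<lambda>h. (col (cd h) (cls A h), offset A h)) ` cmp w ` Hom A B
      = (\<lambda>h. (col C (cls A h), offset A h)) ` cmp w ` Hom A B"
    by (intro image_cong) simp_all
  then show ?thesis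
    unfolding offset_coloring_image[OF w] using card_cartesian_product by simp
qed

lemma comp_image_hom_subset:
  assumes u: "u \<in> Hom Y Z" and w: "w \<in> Hom Z W"
  shows "cmp (cmp w u) ` Hom X Y \<subseteq> cmp w ` Hom X Z"
proof (rule image_subsetI)
  fix f assume f: "f \<in> Hom X Y"
  have "cmp (cmp w u) f = cmp w (cmp u f)" using comp_assoc[OF f u w] by simp
  then show "cmp (cmp w u) f \<in> cmp w ` Hom X Z" using comp_hom[OF f u] by blast
qed

end

definition small_ramsey_bound ::
  "'m set \<Rightarrow> ('m \<Rightarrow> 'o) \<Rightarrow> ('m \<Rightarrow> 'o) \<Rightarrow> ('m \<Rightarrow> 'm \<Rightarrow> 'm) \<Rightarrow> ('o \<Rightarrow> 'm set) \<Rightarrow> 'o set \<Rightarrow> 'o \<Rightarrow> nat \<Rightarrow> bool"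
  where "small_ramsey_bound Mor dm cd cmp G DOb A n \<longleftrightarrow>
    (\<forall>k::nat. \<forall>B\<in>DOb. \<exists>C\<in>DOb. \<forall>(col :: 'm set \<Rightarrow> nat).
       (\<forall>c\<in>binom Mor dm cd cmp G C A. col c < k) \<longrightarrow>
       (\<exists>w\<in>hom Mor dm cd B C. card (col ` wbinom Mor dm cd cmp G w B A) \<le> n))"

definition big_ramsey_bound ::
  "'m set \<Rightarrow> ('m \<Rightarrow> 'o) \<Rightarrow> ('m \<Rightarrow> 'o) \<Rightarrow> ('m \<Rightarrow> 'm \<Rightarrow> 'm) \<Rightarrow> ('o \<Rightarrow> 'o \<Rightarrow> 'm topology) \<Rightarrow> ('o \<Rightarrow> 'm set) \<Rightarrow> 'o \<Rightarrow> 'o \<Rightarrow> nat \<Rightarrow> bool"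
  where "big_ramsey_bound Mor dm cd cmp T G X S n \<longleftrightarrow>
    (\<forall>k::nat. k \<ge> 2 \<longrightarrow> (\<forall>(col :: 'm set \<Rightarrow> nat).
       (\<forall>c\<in>binom Mor dm cd cmp G S X. col c < k) \<longrightarrow>
       (\<forall>i<k. {c \<in> binom Mor dm cd cmp G S X. col c = i} \<in> binom_borel Mor dm cd cmp T G S X) \<longrightarrow>
       (\<exists>w\<in>hom Mor dm cd S S. card (col ` wbinom Mor dm cd cmp G w S X) \<le> n)))"

lemma small_ramsey_degree_eq:
  "small_ramsey_degree Mor dm cd cmp G DOb A = least_pos_or_inf (small_ramsey_bound Mor dm cd cmp G DOb A)"
  unfolding small_ramsey_degree_def small_ramsey_bound_def ..

lemma big_ramsey_degree_eq:
  "big_ramsey_degree Mor dm cd cmp T G X S = least_pos_or_inf (big_ramsey_bound Mor dm cd cmp T G X S)"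
  unfolding big_ramsey_degree_def big_ramsey_bound_def ..

lemma least_pos_or_inf_neq_minf: "least_pos_or_inf P \<noteq> -\<infinity>"
  unfolding least_pos_or_inf_def by simp

lemma least_pos_or_inf_le_mult:
  fixes P Q :: "nat \<Rightarrow> bool" and a g :: nat
  assumes "a > 0" "g > 0" "\<not> P 0" and PQ: "\<And>N. N \<ge> 1 \<Longrightarrow> Q N \<Longrightarrow> P (N * g div a)"
  shows "least_pos_or_inf P \<le> ereal (real g / real a) * least_pos_or_inf Q"
proof (cases "\<exists>N. N \<ge> 1 \<and> Q N")
  case False
  then have "least_pos_or_inf Q = \<infinity>" unfolding least_pos_or_inf_def by auto
  then have infinite: "ereal (real g / real a) * least_pos_or_inf Q = \<infinity>" using assms(1,2) by simp
  show ?thesis unfolding infinite by simp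
next
  case True
  define N where "N = (LEAST N. N \<ge> 1 \<and> Q N)"
  have N: "N \<ge> 1" "Q N" using LeastI_ex[OF True] unfolding N_def by auto
  define m where "m = N * g div a"
  have "P m" unfolding m_def using PQ[OF N] .
  then have "m \<ge> 1" using assms(3) by (cases m) auto
  have "(LEAST n. n \<ge> 1 \<and> P n) \<le> m" using \<open>P m\<close> \<open>m \<ge> 1\<close> by (intro Least_le) simp
  then have "least_pos_or_inf P \<le> ereal (real m)"
    unfolding least_pos_or_inf_def using \<open>P m\<close> \<open>m \<ge> 1\<close> by auto
  also have "m * a \<le> N * g" unfolding m_def by (rule div_times_less_eq_dividend)
  then have "real m * real a \<le> real N * real g" by (metis of_nat_le_iff of_nat_mult)
  then have "ereal (real m) \<le> ereal (real g / real a) * ereal (real N)"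
    using assms(1) by (simp add: field_simps)
  finally show ?thesis using True unfolding least_pos_or_inf_def N_def by simp
qed

locale universal_approximable = mono_category_with_groups Ob Mor dm cd cmp ident G
  for Ob :: "'o set" and Mor :: "'m set" and dm cd :: "'m \<Rightarrow> 'o"
    and cmp :: "'m \<Rightarrow> 'm \<Rightarrow> 'm" and ident :: "'o \<Rightarrow> 'm" and G :: "'o \<Rightarrow> 'm set" +
  fixes T :: "'o \<Rightarrow> 'o \<Rightarrow> 'm topology" and DOb :: "'o set" and S :: 'o
    and F :: "'o \<Rightarrow> 'o" and \<Phi> :: "'o \<Rightarrow> 'm \<Rightarrow> 'm"
  assumes enriched: "Top_enriched Ob Mor dm cd cmp T"
    and Hausdorff: "\<And>A B. A \<in> Ob \<Longrightarrow> B \<in> Ob \<Longrightarrow> Hausdorff_space (T A B)"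
    and D_Ob: "DOb \<subseteq> Ob"
    and countable_D: "countable DOb"
    and finite_hom_D: "\<And>A B. A \<in> DOb \<Longrightarrow> B \<in> DOb \<Longrightarrow> finite (Hom A B)"
    and S_Ob: "S \<in> Ob"
    and universal: "\<And>B. B \<in> DOb \<Longrightarrow> Hom B S \<noteq> {}"
    and second_countable_to_S: "\<And>A. A \<in> DOb \<Longrightarrow> second_countable (T A S)"
    and F_D: "\<And>A. A \<in> DOb \<Longrightarrow> F A \<in> DOb"
    and \<Phi>_hom: "\<And>A u. A \<in> DOb \<Longrightarrow> u \<in> Hom (F A) S \<Longrightarrow> \<exists>C\<in>DOb. \<Phi> A u \<in> Hom A C"
    and \<Phi>_borel: "\<And>A C U. A \<in> DOb \<Longrightarrow> C \<in> DOb \<Longrightarrow> openin (T A C) U \<Longrightarrow>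
        {u \<in> Hom (F A) S. \<Phi> A u \<in> U} \<in> borel_sets (T (F A) S)"
    and \<Phi>_comp: "\<And>A B f u. A \<in> DOb \<Longrightarrow> B \<in> DOb \<Longrightarrow> f \<in> Hom A B \<Longrightarrow> u \<in> Hom (F B) S \<Longrightarrow>
        \<exists>f'\<in>Hom (F A) (F B). \<Phi> A (cmp u f') = cmp (\<Phi> B u) f"
begin

lemma topspace_T: "A \<in> Ob \<Longrightarrow> B \<in> Ob \<Longrightarrow> topspace (T A B) = Hom A B"
  using enriched unfolding Top_enriched_def by blast

lemma continuous_map_comp_right:
  assumes A: "A \<in> Ob" and X: "X \<in> Ob" and \<beta>: "\<beta> \<in> Hom A A"
  shows "continuous_map (T A X) (T A X) (\<lambda>u. cmp u \<beta>)"
proof -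
  have pair: "continuous_map (T A X) (prod_topology (T A X) (T A A)) (\<lambda>u. (u, \<beta>))"
    using \<beta> topspace_T[OF A A] by (intro continuous_map_pairedI) auto
  have "continuous_map (prod_topology (T A X) (T A A)) (T A X) (\<lambda>(g, f). cmp g f)"
    using enriched A X unfolding Top_enriched_def by blast
  from continuous_map_compose[OF pair this] show ?thesis by (simp add: o_def)
qed

lemma finite_G:
  assumes "A \<in> DOb"
  shows "finite (G A)"
proof -
  have "G A \<subseteq> Hom A A" using G_hom D_Ob assms by blast
  then show ?thesis using finite_hom_D[OF assms assms] finite_subset by blast
qed

lemma card_G_pos: "A \<in> DOb \<Longrightarrow> card (G A) > 0"
  using finite_G G_ident D_Ob by (auto simp: card_gt_0_iff)

text \<open>The homsets of D are finite Hausdorff, hence discrete, and D has only countably many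
objects.\<close>

lemma borel_pullback_coloring:
  assumes A: "A \<in> DOb"
  shows "{u \<in> Hom (F A) S. \<kappa> (\<Phi> A u) = j} \<in> borel_sets (T (F A) S)"
proof -
  have FA: "F A \<in> Ob" using F_D[OF A] D_Ob by blast
  interpret sigma_algebra "Hom (F A) S" "borel_sets (T (F A) S)"
    using sigma_algebra_borel_sets[of "T (F A) S"] topspace_T[OF FA S_Ob] by simp
  have discrete: "openin (T A C) {h \<in> Hom A C. \<kappa> h = j}" if C: "C \<in> DOb" for C
  proof -
    have AC: "A \<in> Ob" "C \<in> Ob" using A C D_Ob by blast+
    have "T A C = discrete_topology (Hom A C)"
      using finite_topspace_imp_discrete_topology[OF topspace_T[OF AC] finite_hom_D[OF A C]
          Hausdorff[OF AC]] .
    then show ?thesis by auto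
  qed
  have "{u \<in> Hom (F A) S. \<exists>C\<in>DOb. \<Phi> A u \<in> {h \<in> Hom A C. \<kappa> h = j}} \<in> borel_sets (T (F A) S)"
  proof (rule sets_Collect_countable_Ex'[OF _ countable_D])
    fix C assume C: "C \<in> DOb"
    show "{u \<in> Hom (F A) S. \<Phi> A u \<in> {h \<in> Hom A C. \<kappa> h = j}} \<in> borel_sets (T (F A) S)"
      by (rule \<Phi>_borel[OF A C discrete[OF C]])
  qed
  moreover have "{u \<in> Hom (F A) S. \<exists>C\<in>DOb. \<Phi> A u \<in> {h \<in> Hom A C. \<kappa> h = j}}
      = {u \<in> Hom (F A) S. \<kappa> (\<Phi> A u) = j}"
    using \<Phi>_hom[OF A] by blast
  ultimately show ?thesis by simp
qed

lemma finite_free_action_cls: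
  assumes A: "A \<in> DOb" and X: "X \<in> Ob"
  shows "finite_free_action (T A X) ((\<lambda>\<beta> u. cmp u \<beta>) ` G A) (cls A)"
proof unfold_locales
  have A': "A \<in> Ob" using A D_Ob by blast
  show "finite ((\<lambda>\<beta> u. cmp u \<beta>) ` G A)" using finite_G[OF A] by simp
  show "continuous_map (T A X) (T A X) \<sigma>" if "\<sigma> \<in> (\<lambda>\<beta> u. cmp u \<beta>) ` G A" for \<sigma>
    using that continuous_map_comp_right[OF A' X G_hom[OF A']] by blast
  show "cls A v = cls A u \<longleftrightarrow> (\<exists>\<sigma>\<in>(\<lambda>\<beta> u. cmp u \<beta>) ` G A. v = \<sigma> u)"
    if "u \<in> topspace (T A X)" "v \<in> topspace (T A X)" for u v
    using that cls_eq_iff[of u A X v] by (simp add: topspace_T[OF A' X])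
  show "\<sigma> v = v"
    if \<sigma>: "\<sigma> \<in> (\<lambda>\<beta> u. cmp u \<beta>) ` G A" and uv: "u \<in> topspace (T A X)" "v \<in> topspace (T A X)"
      and fixed: "\<sigma> u = u"
    for \<sigma> u v
  proof -
    obtain \<beta> where \<beta>: "\<beta> \<in> G A" "\<sigma> = (\<lambda>u. cmp u \<beta>)" using \<sigma> by blast
    have u: "u \<in> Hom A X" and v: "v \<in> Hom A X" using uv topspace_T[OF A' X] by auto
    have "cmp u \<beta> = cmp u (ident A)" using fixed \<beta>(2) comp_ident_right[OF u] by simp
    then have "\<beta> = ident A" using mono_cancel[OF u G_hom[OF A' \<beta>(1)] ident_hom[OF A']] by blast
    then show ?thesis using \<beta>(2) comp_ident_right[OF v] by simp
  qed
qed

lemma binom_borel_saturated: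
  assumes A: "A \<in> DOb" and W: "W \<subseteq> Binom S A" "{u \<in> Hom A S. cls A u \<in> W} \<in> borel_sets (T A S)"
  shows "W \<in> binom_borel Mor dm cd cmp T G S A"
proof -
  have A': "A \<in> Ob" using A D_Ob by blast
  interpret finite_free_action "T A S" "(\<lambda>\<beta> u. cmp u \<beta>) ` G A" "cls A"
    by (rule finite_free_action_cls[OF A S_Ob])
  have "binom_borel Mor dm cd cmp T G S A = quotient_sets"
    unfolding binom_borel_def quotient_sets_def binom_def Let_def topspace_T[OF A' S_Ob] ..
  then show ?thesis
    using saturated_borel_quotient_sets[OF Hausdorff[OF A' S_Ob] second_countable_to_S[OF A]] W
    unfolding binom_def topspace_T[OF A' S_Ob] by simp
qed

lemma binom_borel_class_images:
  assumes A: "A \<in> DOb" and R: "countable R" "\<And>u. u \<in> Hom A S \<Longrightarrow> \<gamma> u \<in> R"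
    and fibers: "\<And>j. {u \<in> Hom A S. \<gamma> u = j} \<in> borel_sets (T A S)"
  shows "{c \<in> Binom S A. P (\<gamma> ` c)} \<in> binom_borel Mor dm cd cmp T G S A"
proof (rule binom_borel_saturated[OF A])
  have A': "A \<in> Ob" using A D_Ob by blast
  have "{u \<in> topspace (T A S). P ((\<lambda>\<beta>. \<gamma> (cmp u \<beta>)) ` G A)} \<in> borel_sets (T A S)"
  proof (rule borel_sets_image_of_fibers[OF finite_G[OF A] R(1)])
    fix \<beta> u assume "\<beta> \<in> G A" "u \<in> topspace (T A S)"
    then show "\<gamma> (cmp u \<beta>) \<in> R"
      using R(2) comp_hom G_hom[OF A'] topspace_T[OF A' S_Ob] by blast
  next
    fix \<beta> j assume \<beta>: "\<beta> \<in> G A"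
    have "{u \<in> topspace (T A S). cmp u \<beta> \<in> {u \<in> Hom A S. \<gamma> u = j}} \<in> borel_sets (T A S)"
      using borel_sets_continuous_map_preimage[OF
          continuous_map_comp_right[OF A' S_Ob G_hom[OF A' \<beta>]] fibers] .
    moreover have "{u \<in> topspace (T A S). cmp u \<beta> \<in> {u \<in> Hom A S. \<gamma> u = j}}
        = {u \<in> topspace (T A S). \<gamma> (cmp u \<beta>) = j}"
      using comp_hom[OF G_hom[OF A' \<beta>]] topspace_T[OF A' S_Ob] by blast
    ultimately show "{u \<in> topspace (T A S). \<gamma> (cmp u \<beta>) = j} \<in> borel_sets (T A S)" by simp
  qed
  moreover have "cls A u \<in> {c \<in> Binom S A. P (\<gamma> ` c)} \<longleftrightarrow> P ((\<lambda>\<beta>. \<gamma> (cmp u \<beta>)) ` G A)"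
    if "u \<in> Hom A S" for u
  proof -
    have "cls A u \<in> Binom S A" unfolding binom_def using that by blast
    moreover have "\<gamma> ` cls A u = (\<lambda>\<beta>. \<gamma> (cmp u \<beta>)) ` G A"
      unfolding gclass_def by (simp add: image_image)
    ultimately show ?thesis by simp
  qed
  then have "{u \<in> Hom A S. cls A u \<in> {c \<in> Binom S A. P (\<gamma> ` c)}}
      = {u \<in> topspace (T A S). P ((\<lambda>\<beta>. \<gamma> (cmp u \<beta>)) ` G A)}"
    unfolding topspace_T[OF A' S_Ob] by (intro Collect_cong conj_cong refl) simp
  ultimately show "{u \<in> Hom A S. cls A u \<in> {c \<in> Binom S A. P (\<gamma> ` c)}} \<in> borel_sets (T A S)"
    by simp
qed auto

text \<open>Apply the big Ramsey property to the colouring of each class by the set of colours it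
contains, coded injectively into a bounded range of natural numbers.\<close>

lemma big_ramsey_bound_image:
  assumes X: "X \<in> DOb" and N: "big_ramsey_bound Mor dm cd cmp T G X S N"
    and R: "finite R" "\<And>u. u \<in> Hom X S \<Longrightarrow> \<gamma> u \<in> R"
    and fibers: "\<And>j. {u \<in> Hom X S. \<gamma> u = j} \<in> borel_sets (T X S)"
  shows "\<exists>w\<in>Hom S S. card (\<gamma> ` cmp w ` Hom X S) \<le> N * card (G X)"
proof -
  obtain e :: "_ \<Rightarrow> nat" and n where e: "inj_on e (Pow R)" "e ` Pow R = {i. i < n}"
    using finite_imp_inj_to_nat_seg[of "Pow R"] R(1) by auto
  have \<gamma>_cls: "\<gamma> ` cls X u \<in> Pow R" if "u \<in> Hom X S" for u
    using cls_hom[OF that] R(2) by blast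
  define \<delta> where "\<delta> c = e (\<gamma> ` c)" for c
  have bounded: "\<delta> c < max 2 n" if c: "c \<in> Binom S X" for c
  proof -
    obtain u where "u \<in> Hom X S" "c = cls X u" using c unfolding binom_def by blast
    then have "\<delta> c \<in> {i. i < n}" unfolding \<delta>_def using \<gamma>_cls e(2) by blast
    then show ?thesis by simp
  qed
  have borel: "{c \<in> Binom S X. \<delta> c = i} \<in> binom_borel Mor dm cd cmp T G S X" for i
    unfolding \<delta>_def by (rule binom_borel_class_images[OF X countable_finite[OF R(1)] R(2) fibers])
  obtain w where w: "w \<in> Hom S S" "card (\<delta> ` WBinom w S X) \<le> N"
    using N[unfolded big_ramsey_bound_def, rule_format, OF max.cobounded1 bounded borel] by blast
  have W_Pow: "(\<lambda>c. \<gamma> ` c) ` WBinom w S X \<subseteq> Pow R"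
    unfolding wbinom_def using \<gamma>_cls comp_hom w(1) by blast
  have "card (\<gamma> ` cmp w ` Hom X S) = card (\<gamma> ` \<Union> (WBinom w S X))"
    using Union_wbinom[OF w(1)] by simp
  also have "\<dots> \<le> card ((\<lambda>c. \<gamma> ` c) ` WBinom w S X) * card (G X)"
    using finite_cls[OF finite_G[OF X]] finite_subset[OF W_Pow] R(1)
    unfolding wbinom_def by (intro card_image_Union_le) auto
  also have "card ((\<lambda>c. \<gamma> ` c) ` WBinom w S X) = card (\<delta> ` WBinom w S X)"
    unfolding \<delta>_def image_image[of e "\<lambda>c. \<gamma> ` c", symmetric]
    using card_image[OF inj_on_subset[OF e(1) W_Pow]] by simp
  finally show ?thesis using w mult_le_mono1[OF w(2)] by (blast intro: le_trans)
qed

lemma \<Phi>_comp_image: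
  assumes A: "A \<in> DOb" and B: "B \<in> DOb" and u: "u \<in> Hom (F B) S"
  shows "cmp (\<Phi> B u) ` Hom A B \<subseteq> \<Phi> A ` cmp u ` Hom (F A) (F B)"
proof (rule image_subsetI)
  fix f assume "f \<in> Hom A B"
  then obtain f' where f': "f' \<in> Hom (F A) (F B)" and eq: "\<Phi> A (cmp u f') = cmp (\<Phi> B u) f"
    using \<Phi>_comp[OF A B _ u] by blast
  have "cmp u f' \<in> cmp u ` Hom (F A) (F B)" using f' by (rule imageI)
  then show "cmp (\<Phi> B u) f \<in> \<Phi> A ` cmp u ` Hom (F A) (F B)"
    by (rule image_eqI[where f = "\<Phi> A", OF eq[symmetric]])
qed

lemma few_colours_on_some_copy:
  fixes col :: "'o \<Rightarrow> 'm set \<Rightarrow> nat"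
  assumes A: "A \<in> DOb" and B: "B \<in> DOb" and N: "big_ramsey_bound Mor dm cd cmp T G (F A) S N"
    and col: "\<And>C c. C \<in> DOb \<Longrightarrow> c \<in> Binom C A \<Longrightarrow> col C c < k"
  shows "\<exists>C\<in>DOb. \<exists>z\<in>Hom B C. card (col C ` WBinom z B A) * card (G A) \<le> N * card (G (F A))"
proof -
  define \<kappa> where "\<kappa> h = (col (cd h) (cls A h), offset A h)" for h
  define \<gamma> where "\<gamma> u = \<kappa> (\<Phi> A u)" for u
  have \<gamma>_range: "\<gamma> u \<in> {..<k} \<times> G A" if u: "u \<in> Hom (F A) S" for u
  proof -
    obtain C where C: "C \<in> DOb" "\<Phi> A u \<in> Hom A C" using \<Phi>_hom[OF A u] by blast
    have "cls A (\<Phi> A u) \<in> Binom C A" unfolding binom_def using C(2) by blast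
    moreover have "cd (\<Phi> A u) = C" using C(2) unfolding hom_def by blast
    ultimately show ?thesis unfolding \<gamma>_def \<kappa>_def using col[OF C(1)] rep_offset[OF C(2)] by simp
  qed
  have \<gamma>_borel: "{u \<in> Hom (F A) S. \<gamma> u = j} \<in> borel_sets (T (F A) S)" for j
    unfolding \<gamma>_def by (rule borel_pullback_coloring[OF A])
  obtain w where w: "w \<in> Hom S S" "card (\<gamma> ` cmp w ` Hom (F A) S) \<le> N * card (G (F A))"
    using big_ramsey_bound_image[OF F_D[OF A] N _ \<gamma>_range \<gamma>_borel] finite_G[OF A] by blast
  obtain u0 where u0: "u0 \<in> Hom (F B) S" using universal[OF F_D[OF B]] by blast
  have v: "cmp w u0 \<in> Hom (F B) S" using comp_hom[OF u0 w(1)] .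
  obtain C where C: "C \<in> DOb" "\<Phi> B (cmp w u0) \<in> Hom B C" using \<Phi>_hom[OF B v] by blast
  have "card (col C ` WBinom (\<Phi> B (cmp w u0)) B A) * card (G A)
      = card (\<kappa> ` cmp (\<Phi> B (cmp w u0)) ` Hom A B)"
    unfolding \<kappa>_def by (rule card_offset_coloring_image[OF C(2) finite_G[OF A], symmetric])
  also have "\<dots> \<le> card (\<gamma> ` cmp w ` Hom (F A) S)"
  proof (rule card_mono)
    have "\<gamma> ` cmp w ` Hom (F A) S \<subseteq> {..<k} \<times> G A" using \<gamma>_range comp_hom w(1) by blast
    then show "finite (\<gamma> ` cmp w ` Hom (F A) S)" using finite_G[OF A] finite_subset by blast
    have "\<kappa> ` cmp (\<Phi> B (cmp w u0)) ` Hom A B \<subseteq> \<kappa> ` \<Phi> A ` cmp w ` Hom (F A) S"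
      using subset_trans[OF \<Phi>_comp_image[OF A B v] image_mono[OF comp_image_hom_subset[OF u0 w(1)]]] by (rule image_mono)
    moreover have "\<kappa> ` \<Phi> A ` X = \<gamma> ` X" for X unfolding \<gamma>_def by (simp add: image_image)
    ultimately show "\<kappa> ` cmp (\<Phi> B (cmp w u0)) ` Hom A B \<subseteq> \<gamma> ` cmp w ` Hom (F A) S" by simp
  qed
  also have "\<dots> \<le> N * card (G (F A))" by (rule w(2))
  finally show ?thesis using C by blast
qed

lemma small_ramsey_bound_of_big:
  assumes A: "A \<in> DOb" and N: "big_ramsey_bound Mor dm cd cmp T G (F A) S N"
  shows "small_ramsey_bound Mor dm cd cmp G DOb A (N * card (G (F A)) div card (G A))"
  unfolding small_ramsey_bound_def
proof (intro allI ballI)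
  fix k :: nat and B assume B: "B \<in> DOb"
  let ?m = "N * card (G (F A)) div card (G A)"
  show "\<exists>C\<in>DOb. \<forall>col. (\<forall>c\<in>Binom C A. col c < k) \<longrightarrow>
          (\<exists>w\<in>Hom B C. card (col ` WBinom w B A) \<le> ?m)"
  proof (rule ccontr)
    assume "\<not> ?thesis"
    then have "\<forall>C\<in>DOb. \<exists>col. (\<forall>c\<in>Binom C A. col c < k) \<and>
        (\<forall>w\<in>Hom B C. ?m < card (col ` WBinom w B A))"
      by (simp add: not_le)
    then obtain col where col: "\<And>C. C \<in> DOb \<Longrightarrow> (\<forall>c\<in>Binom C A. col C c < k) \<and>
        (\<forall>w\<in>Hom B C. ?m < card (col C ` WBinom w B A))"
      by (rule bchoice[elim_format]) blast
    obtain C z where C: "C \<in> DOb" "z \<in> Hom B C"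
      and few: "card (col C ` WBinom z B A) * card (G A) \<le> N * card (G (F A))"
      using few_colours_on_some_copy[OF A B N, of col k] col by blast
    have "card (col C ` WBinom z B A) \<le> ?m"
      using few by (simp add: less_eq_div_iff_mult_less_eq card_G_pos[OF A])
    then show False using col[OF C(1)] C(2) by (simp add: not_less[symmetric])
  qed
qed

lemma not_small_ramsey_bound_zero:
  assumes A: "A \<in> DOb"
  shows "\<not> small_ramsey_bound Mor dm cd cmp G DOb A 0"
proof
  assume "small_ramsey_bound Mor dm cd cmp G DOb A 0"
  then obtain C where "C \<in> DOb" and C: "\<forall>col. (\<forall>c\<in>Binom C A. col c < (1::nat)) \<longrightarrow>
      (\<exists>w\<in>Hom A C. card (col ` WBinom w A A) \<le> 0)"
    unfolding small_ramsey_bound_def using A by blast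
  then obtain w where "card ((\<lambda>_. 0::nat) ` WBinom w A A) \<le> 0"
    by (metis less_one)
  moreover have "WBinom w A A \<noteq> {}"
    unfolding wbinom_def using ident_hom A D_Ob by blast
  ultimately show False by (simp add: image_constant_conv)
qed

lemma small_ramsey_degree_le:
  assumes A: "A \<in> DOb"
  shows "small_ramsey_degree Mor dm cd cmp G DOb A
    \<le> ereal (real (card (G (F A))) / real (card (G A))) * big_ramsey_degree Mor dm cd cmp T G (F A) S"
  unfolding small_ramsey_degree_eq big_ramsey_degree_eq
  using card_G_pos[OF A] card_G_pos[OF F_D[OF A]] not_small_ramsey_bound_zero[OF A]
    small_ramsey_bound_of_big[OF A]
  by (rule least_pos_or_inf_le_mult)

lemma small_ramsey_degree_finite:
  assumes A: "A \<in> DOb" and finite_big: "big_ramsey_degree Mor dm cd cmp T G (F A) S < \<infinity>"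
  shows "small_ramsey_degree Mor dm cd cmp G DOb A < \<infinity>"
proof -
  have "big_ramsey_degree Mor dm cd cmp T G (F A) S \<noteq> -\<infinity>"
    unfolding big_ramsey_degree_eq by (rule least_pos_or_inf_neq_minf)
  with finite_big have "ereal (real (card (G (F A))) / real (card (G A)))
      * big_ramsey_degree Mor dm cd cmp T G (F A) S < \<infinity>"
    by (cases "big_ramsey_degree Mor dm cd cmp T G (F A) S") auto
  with small_ramsey_degree_le[OF A] show ?thesis by (rule le_less_trans)
qed

end

lemma universal_approximable_of_finite_objects:
  assumes "mono_category_with_groups Ob Mor dm cd cmp ident G"
    and enriched: "Top_enriched Ob Mor dm cd cmp T"
    and hausdorff: "\<forall>A\<in>Ob. \<forall>B\<in>Ob. Hausdorff_space (T A B)"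
    and "DOb \<subseteq> Ob"
    and Dfin: "skeletal_cat_finite_objects Mor dm cd cmp ident DOb"
    and "S \<in> Ob"
    and universal: "\<forall>B\<in>DOb. hom Mor dm cd B S \<noteq> {}"
    and approx: "approximable Mor dm cd cmp T DOb S F \<Phi>"
    and second_countable: "\<forall>A\<in>DOb. second_countable (T A S)"
  shows "universal_approximable Ob Mor dm cd cmp ident G T DOb S F \<Phi>"
proof (intro universal_approximable.intro[OF assms(1)] universal_approximable_axioms.intro)
  note approx_parts = approx[unfolded approximable_def]
  show "countable DOb" using Dfin unfolding skeletal_cat_finite_objects_def by blast
  show "finite (hom Mor dm cd A B)" if "A \<in> DOb" "B \<in> DOb" for A B
  proof (rule finite_subset)
    show "hom Mor dm cd A B \<subseteq> {f \<in> Mor. dm f \<in> DOb \<and> cd f = B}"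
      using that(1) unfolding hom_def by blast
    show "finite {f \<in> Mor. dm f \<in> DOb \<and> cd f = B}"
      using Dfin that(2) unfolding skeletal_cat_finite_objects_def by blast
  qed
  show "Hausdorff_space (T A B)" if "A \<in> Ob" "B \<in> Ob" for A B using hausdorff that by blast
  show "hom Mor dm cd B S \<noteq> {}" if "B \<in> DOb" for B using universal that by blast
  show "second_countable (T A S)" if "A \<in> DOb" for A using second_countable that by blast
  show "F A \<in> DOb" if "A \<in> DOb" for A
    using approx_parts[THEN conjunct1] that by blast
  show "\<exists>C\<in>DOb. \<Phi> A u \<in> hom Mor dm cd A C" if "A \<in> DOb" "u \<in> hom Mor dm cd (F A) S" for A u
    using approx_parts[THEN conjunct2, THEN conjunct1] that by blast
  show "{u \<in> hom Mor dm cd (F A) S. \<Phi> A u \<in> U} \<in> borel_sets (T (F A) S)"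
    if "A \<in> DOb" "C \<in> DOb" "openin (T A C) U" for A C U
    using approx_parts[THEN conjunct2, THEN conjunct2, THEN conjunct1] that by blast
  show "\<exists>f'\<in>hom Mor dm cd (F A) (F B). \<Phi> A (cmp u f') = cmp (\<Phi> B u) f"
    if "A \<in> DOb" "B \<in> DOb" "f \<in> hom Mor dm cd A B" "u \<in> hom Mor dm cd (F B) S" for A B f u
    using approx_parts[THEN conjunct2, THEN conjunct2, THEN conjunct2] that by blast
qed (fact assms)+

theorem corollary5p6:
  fixes Ob :: "'o set" and Mor :: "'m set" and dm cd :: "'m \<Rightarrow> 'o"
    and cmp :: "'m \<Rightarrow> 'm \<Rightarrow> 'm" and ident :: "'o \<Rightarrow> 'm"
    and T :: "'o \<Rightarrow> 'o \<Rightarrow> 'm topology"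
    and DOb :: "'o set" and S :: 'o and F :: "'o \<Rightarrow> 'o" and \<Phi> :: "'o \<Rightarrow> 'm \<Rightarrow> 'm"
    and G :: "'o \<Rightarrow> 'm set"
  assumes cat: "is_category Ob Mor dm cd cmp ident"
    and mono: "all_mono Mor dm cd cmp"
    and enriched: "Top_enriched Ob Mor dm cd cmp T"
    and hausdorff: "\<forall>A\<in>Ob. \<forall>B\<in>Ob. Hausdorff_space (T A B)"
    and DsubC: "DOb \<subseteq> Ob"
    and Dfin: "skeletal_cat_finite_objects Mor dm cd cmp ident DOb"
    and S_in: "S \<in> Ob"
    and universal: "\<forall>D\<in>DOb. hom Mor dm cd D S \<noteq> {}"
    and approx: "approximable Mor dm cd cmp T DOb S F \<Phi>"
    and groups: "\<forall>A\<in>Ob. subgroup_Aut Mor dm cd cmp ident A (G A)"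
    and lcsc: "\<forall>A\<in>DOb. locally_compact_space (T A S) \<and> second_countable (T A S)
                        \<and> Hausdorff_space (T A S)"
  shows "(\<forall>A\<in>DOb. finite (G A) \<and> finite (G (F A)) \<and>
            small_ramsey_degree Mor dm cd cmp G DOb A
              \<le> ereal (real (card (G (F A))) / real (card (G A)))
                 * big_ramsey_degree Mor dm cd cmp T G (F A) S)
       \<and> ((\<forall>A\<in>DOb. big_ramsey_degree Mor dm cd cmp T G A S < \<infinity>)
            \<longrightarrow> (\<forall>A\<in>DOb. small_ramsey_degree Mor dm cd cmp G DOb A < \<infinity>))"
proof -
  interpret universal_approximable Ob Mor dm cd cmp ident G T DOb S F \<Phi>
    using universal_approximable_of_finite_objects[OF
        mono_category_with_groups.intro[OF cat mono groups] enriched hausdorff DsubC Dfin S_in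
        universal approx] lcsc
    by blast
  show ?thesis
  proof (intro conjI ballI impI)
    fix A assume A: "A \<in> DOb"
    show "finite (G A)" by (rule finite_G[OF A])
    show "finite (G (F A))" by (rule finite_G[OF F_D[OF A]])
    show "small_ramsey_degree Mor dm cd cmp G DOb A
      \<le> ereal (real (card (G (F A))) / real (card (G A))) * big_ramsey_degree Mor dm cd cmp T G (F A) S"
      by (rule small_ramsey_degree_le[OF A])
  next
    fix A assume "\<forall>A\<in>DOb. big_ramsey_degree Mor dm cd cmp T G A S < \<infinity>" and A: "A \<in> DOb"
    then show "small_ramsey_degree Mor dm cd cmp G DOb A < \<infinity>"
      using small_ramsey_degree_finite[OF A] F_D[OF A] by blast
  qed
qed

end
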